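(* Let $U,V$ be nonempty sets, $A,A^*$ fuzzy subsets of $U$ and $B$ a fuzzy subset of $V$. Let $\odot$ be a semi-overlap function having $1$ as neutral element and let $\rightarrow$ be its residual implication, $a\rightarrow b=\sup\{w\in[0,1]\mid a\odot w\le b\}$. Then the FMP-solution $B^*$ of the quintuple implication principle exists and is given, for every $v\in V$, by $$B^*(v)=\sup_{u\in U}\big\{A^*(u)\odot[(A^*(u)\rightarrow A(u))\odot(A(u)\rightarrow B(v))]\big\}.$$
   Context: A semi-overlap function is a function $\odot:[0,1]^2\to[0,1]$ such that for all $u,v\in[0,1]$: $u\odot v=v\odot u$; if $uv=0$ then $u\odot v=0$; if $uv=1$ then $u\odot v=1$; $\odot$ is increasing in each variable; and $\odot$ is left-continuous: $u\odot\sup_{i\in I}v_i=\sup_{i\in I}(u\odot v_i)$ for every $u$ and nonempty family $\{v_i\}_{i\in I}\subseteq[0,1]$. $1$ is a neutral element if $1\odot v=v$ for all $v$. A fuzzy subset of $U$ is a function $U\to[0,1]$; fuzzy subsets are ordered pointwise. Given $A,A^*$ on $U$ and $B$ on $V$, the FMP-solution of the quintuple implication principle is the minimum fuzzy subset $B^*$ of $V$ (with respect to the pointwise order) such that for all $u\in U,v\in V$, $$(A(u)\rightarrow B(v))\rightarrow\big((A^*(u)\rightarrow A(u))\rightarrow(A^*(u)\rightarrow B^*(v))\big)=1.$$ *)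

theory Defs
  imports Complex_Main
begin

text \<open>Truth values are reals in the unit interval [0,1]. A binary operator on [0,1]
is modelled as a function real => real => real whose behaviour is only constrained on [0,1].\<close>

definition semi_overlap :: "(real \<Rightarrow> real \<Rightarrow> real) \<Rightarrow> bool" where
  "semi_overlap ov \<longleftrightarrow>
     (\<forall>u\<in>{0..1}. \<forall>v\<in>{0..1}. ov u v \<in> {0..1}) \<and>
     (\<forall>u\<in>{0..1}. \<forall>v\<in>{0..1}. ov u v = ov v u) \<and>
     (\<forall>u\<in>{0..1}. \<forall>v\<in>{0..1}. u * v = 0 \<longrightarrow> ov u v = 0) \<and>
     (\<forall>u\<in>{0..1}. \<forall>v\<in>{0..1}. u * v = 1 \<longrightarrow> ov u v = 1) \<and>
     (\<forall>u\<in>{0..1}. \<forall>v\<in>{0..1}. \<forall>w\<in>{0..1}. v \<le> w \<longrightarrow> ov u v \<le> ov u w) \<and>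
     (\<forall>u\<in>{0..1}. \<forall>S. S \<noteq> {} \<longrightarrow> S \<subseteq> {0..1} \<longrightarrow>
        ov u (Sup S) = (SUP v\<in>S. ov u v))"

definition one_neutral :: "(real \<Rightarrow> real \<Rightarrow> real) \<Rightarrow> bool" where
  "one_neutral ov \<longleftrightarrow> (\<forall>v\<in>{0..1}. ov 1 v = v)"

definition residual :: "(real \<Rightarrow> real \<Rightarrow> real) \<Rightarrow> real \<Rightarrow> real \<Rightarrow> real" where
  "residual ov a b = Sup {w \<in> {0..1}. ov a w \<le> b}"

definition fuzzy_subset :: "('a \<Rightarrow> real) \<Rightarrow> bool" where
  "fuzzy_subset A \<longleftrightarrow> (\<forall>x. A x \<in> {0..1})"

definition QIP_FMP_cond ::
  "(real \<Rightarrow> real \<Rightarrow> real) \<Rightarrow> ('u \<Rightarrow> real) \<Rightarrow> ('u \<Rightarrow> real) \<Rightarrow> ('v \<Rightarrow> real) \<Rightarrow> ('v \<Rightarrow> real) \<Rightarrow> bool" where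
  "QIP_FMP_cond ov A As B Bs \<longleftrightarrow>
     fuzzy_subset Bs \<and>
     (\<forall>u v. residual ov (residual ov (A u) (B v))
              (residual ov (residual ov (As u) (A u)) (residual ov (As u) (Bs v))) = 1)"

definition QIP_FMP_solution ::
  "(real \<Rightarrow> real \<Rightarrow> real) \<Rightarrow> ('u \<Rightarrow> real) \<Rightarrow> ('u \<Rightarrow> real) \<Rightarrow> ('v \<Rightarrow> real) \<Rightarrow> ('v \<Rightarrow> real) \<Rightarrow> bool" where
  "QIP_FMP_solution ov A As B Bs \<longleftrightarrow>
     QIP_FMP_cond ov A As B Bs \<and>
     (\<forall>C. QIP_FMP_cond ov A As B C \<longrightarrow> (\<forall>v. Bs v \<le> C v))"

end

theory Submission
  imports Defs
begin

text \<open>Left-continuity of a semi-overlap function makes it residuated: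
  \<open>a \<odot> w \<le> b \<longleftrightarrow> w \<le> (a \<rightarrow> b)\<close>, and with \<open>1\<close> neutral, \<open>x \<rightarrow> y = 1 \<longleftrightarrow> x \<le> y\<close>.
  Applying these two facts three times turns the quintuple implication condition at \<open>(u, v)\<close>
  into \<open>A*(u) \<odot> [(A*(u) \<rightarrow> A(u)) \<odot> (A(u) \<rightarrow> B(v))] \<le> B*(v)\<close>, so the least solution is the
  pointwise supremum over \<open>u\<close> of the left-hand side.\<close>

lemma semi_overlap_in_unit:
  "semi_overlap ov \<Longrightarrow> a \<in> {0..1} \<Longrightarrow> b \<in> {0..1} \<Longrightarrow> ov a b \<in> {0..1}"
  unfolding semi_overlap_def by (elim conjE) blast

lemma semi_overlap_commute:
  "semi_overlap ov \<Longrightarrow> a \<in> {0..1} \<Longrightarrow> b \<in> {0..1} \<Longrightarrow> ov a b = ov b a"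
  unfolding semi_overlap_def by (elim conjE) blast

lemma semi_overlap_zero_right:
  "semi_overlap ov \<Longrightarrow> a \<in> {0..1} \<Longrightarrow> ov a 0 = 0"
  unfolding semi_overlap_def
  by (elim conjE) (metis atLeastAtMost_iff mult_zero_right order_refl zero_le_one)

lemma semi_overlap_mono:
  "semi_overlap ov \<Longrightarrow> a \<in> {0..1} \<Longrightarrow> v \<in> {0..1} \<Longrightarrow> w \<in> {0..1} \<Longrightarrow> v \<le> w
    \<Longrightarrow> ov a v \<le> ov a w"
  unfolding semi_overlap_def by (elim conjE) blast

lemma semi_overlap_Sup:
  "semi_overlap ov \<Longrightarrow> a \<in> {0..1} \<Longrightarrow> S \<noteq> {} \<Longrightarrow> S \<subseteq> {0..1}
    \<Longrightarrow> ov a (Sup S) = (SUP v\<in>S. ov a v)"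
  unfolding semi_overlap_def by (elim conjE) blast

lemma one_neutral_right:
  "semi_overlap ov \<Longrightarrow> one_neutral ov \<Longrightarrow> a \<in> {0..1} \<Longrightarrow> ov a 1 = a"
  unfolding one_neutral_def using semi_overlap_commute[of ov a 1] by simp

lemma residual_in_unit_and_adjoint:
  assumes so: "semi_overlap ov" and a: "a \<in> {0..1}" and b: "b \<in> {0..1}"
  shows "residual ov a b \<in> {0..1}"
    and "w \<in> {0..1} \<Longrightarrow> ov a w \<le> b \<longleftrightarrow> w \<le> residual ov a b"
proof -
  define S where "S = {w \<in> {0..1}. ov a w \<le> b}"
  have "0 \<in> S"
    using semi_overlap_zero_right[OF so a] b by (simp add: S_def)
  have S_unit: "S \<subseteq> {0..1}"
    by (auto simp: S_def)
  then have bdd: "bdd_above S"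
    by (intro bdd_aboveI[of _ 1]) auto
  have res: "residual ov a b = Sup S"
    by (simp add: residual_def S_def)
  have Sup_unit: "Sup S \<in> {0..1}"
    using cSup_upper[OF \<open>0 \<in> S\<close> bdd] cSup_least[of S 1] S_unit \<open>0 \<in> S\<close> by fastforce
  then show "residual ov a b \<in> {0..1}"
    by (simp add: res)
  have S_ne: "S \<noteq> {}"
    using \<open>0 \<in> S\<close> by blast
  have "ov a (Sup S) = (SUP v\<in>S. ov a v)"
    using semi_overlap_Sup[OF so a S_ne S_unit] .
  also have "\<dots> \<le> b"
    by (rule cSUP_least[OF S_ne]) (simp add: S_def)
  finally have Sup_in: "ov a (Sup S) \<le> b" .
  assume w: "w \<in> {0..1}"
  show "ov a w \<le> b \<longleftrightarrow> w \<le> residual ov a b"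
  proof
    assume "ov a w \<le> b"
    then show "w \<le> residual ov a b"
      using w cSup_upper[OF _ bdd] by (simp add: res S_def)
  next
    assume "w \<le> residual ov a b"
    then have "ov a w \<le> ov a (Sup S)"
      using semi_overlap_mono[OF so a w Sup_unit] by (simp add: res)
    then show "ov a w \<le> b"
      using Sup_in by simp
  qed
qed

lemmas residual_in_unit = residual_in_unit_and_adjoint(1)
lemmas residual_adjoint = residual_in_unit_and_adjoint(2)

lemma residual_eq_one_iff:
  assumes so: "semi_overlap ov" and ne: "one_neutral ov"
    and x: "x \<in> {0..1}" and y: "y \<in> {0..1}"
  shows "residual ov x y = 1 \<longleftrightarrow> x \<le> y"
  using residual_adjoint[OF so x y, of 1] residual_in_unit[OF so x y]
    one_neutral_right[OF so ne x] by auto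

lemma quintuple_implication_eq_one_iff:
  assumes so: "semi_overlap ov" and ne: "one_neutral ov"
    and x: "x \<in> {0..1}" and y: "y \<in> {0..1}" and a: "a \<in> {0..1}" and c: "c \<in> {0..1}"
  shows "residual ov (residual ov x y) (residual ov (residual ov a x) (residual ov a c)) = 1
    \<longleftrightarrow> ov a (ov (residual ov a x) (residual ov x y)) \<le> c"
proof -
  have xy: "residual ov x y \<in> {0..1}" and ax: "residual ov a x \<in> {0..1}"
    and ac: "residual ov a c \<in> {0..1}"
    using residual_in_unit[OF so] x y a c by auto
  have "residual ov (residual ov x y) (residual ov (residual ov a x) (residual ov a c)) = 1
    \<longleftrightarrow> residual ov x y \<le> residual ov (residual ov a x) (residual ov a c)"
    using residual_eq_one_iff[OF so ne xy residual_in_unit[OF so ax ac]] .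
  also have "\<dots> \<longleftrightarrow> ov (residual ov a x) (residual ov x y) \<le> residual ov a c"
    using residual_adjoint[OF so ax ac xy] by simp
  also have "\<dots> \<longleftrightarrow> ov a (ov (residual ov a x) (residual ov x y)) \<le> c"
    using residual_adjoint[OF so a c semi_overlap_in_unit[OF so ax xy]] by simp
  finally show ?thesis .
qed

lemma QIP_FMP_cond_iff:
  assumes so: "semi_overlap ov" and ne: "one_neutral ov"
    and "fuzzy_subset A" and "fuzzy_subset As" and "fuzzy_subset B" and C: "fuzzy_subset C"
  shows "QIP_FMP_cond ov A As B C \<longleftrightarrow>
    (\<forall>u v. ov (As u) (ov (residual ov (As u) (A u)) (residual ov (A u) (B v))) \<le> C v)"
  using assms quintuple_implication_eq_one_iff[OF so ne]
  unfolding QIP_FMP_cond_def fuzzy_subset_def by simp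

lemma fuzzy_subset_SUP:
  assumes "\<And>u v. T u v \<in> {0..1}"
  shows "fuzzy_subset (\<lambda>v. SUP u. T u v)"
  unfolding fuzzy_subset_def
proof
  fix v
  have "T undefined v \<le> (SUP u. T u v)"
    using assms by (intro cSUP_upper bdd_aboveI[of _ 1]) auto
  moreover have "(SUP u. T u v) \<le> 1"
    using assms by (intro cSUP_least) auto
  ultimately show "(SUP u. T u v) \<in> {0..1}"
    using assms[of undefined v] by auto
qed

theorem theorem4p2:
  fixes ov :: "real \<Rightarrow> real \<Rightarrow> real"
    and A As :: "'u \<Rightarrow> real" and B :: "'v \<Rightarrow> real"
  assumes "semi_overlap ov" and "one_neutral ov"
    and "fuzzy_subset A" and "fuzzy_subset As" and "fuzzy_subset B"
  shows "QIP_FMP_solution ov A As B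
           (\<lambda>v. SUP u. ov (As u) (ov (residual ov (As u) (A u)) (residual ov (A u) (B v))))"
proof -
  define T where "T u v = ov (As u) (ov (residual ov (As u) (A u)) (residual ov (A u) (B v)))"
    for u v
  have "A u \<in> {0..1}" "As u \<in> {0..1}" "B v \<in> {0..1}" for u v
    using assms(3-5) unfolding fuzzy_subset_def by auto
  then have T_unit: "T u v \<in> {0..1}" for u v
    unfolding T_def by (intro semi_overlap_in_unit[OF assms(1)] residual_in_unit[OF assms(1)])
  have cond_iff: "QIP_FMP_cond ov A As B C \<longleftrightarrow> (\<forall>u v. T u v \<le> C v)" if "fuzzy_subset C" for C
    using QIP_FMP_cond_iff[OF assms that] unfolding T_def .
  have "fuzzy_subset (\<lambda>v. SUP u. T u v)"
    using T_unit by (rule fuzzy_subset_SUP)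
  moreover have "T u v \<le> (SUP u. T u v)" for u v
    using T_unit by (intro cSUP_upper bdd_aboveI[of _ 1]) auto
  ultimately have "QIP_FMP_cond ov A As B (\<lambda>v. SUP u. T u v)"
    by (simp add: cond_iff)
  moreover have "(SUP u. T u v) \<le> C v" if "QIP_FMP_cond ov A As B C" for C v
    using that cond_iff[of C] unfolding QIP_FMP_cond_def by (auto intro: cSUP_least)
  ultimately show ?thesis
    unfolding QIP_FMP_solution_def T_def by blast
qed

end
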